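(* For positive integers $n$ and $a$ with $2a\le n$, $S_{\mathcal{Q}}(K_{a,n-a})\ge S_{\mathcal{Q}}(K_{\lfloor n/2\rfloor,\lceil n/2\rceil})$, with equality if and only if $K_{a,n-a}\cong K_{\lfloor n/2\rfloor,\lceil n/2\rceil}$ (i.e. $a=\lfloor n/2\rfloor$).
   Context: For a connected graph $G$ with vertex set $\{v_1,\dots,v_n\}$: $\mathcal{D}(G)=(d_G(v_i,v_j))$ is the distance matrix, $D_i=\sum_j d_G(v_i,v_j)$, $Tr(G)=\mathrm{diag}(D_1,\dots,D_n)$, $\mathcal{Q}(G)=Tr(G)+\mathcal{D}(G)$, and $S_{\mathcal{Q}}(G)$ is the difference between the largest and the least eigenvalue of $\mathcal{Q}(G)$. $K_{a,b}$ is the complete bipartite graph with parts of sizes $a,b$. *)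

theory Defs
  imports "Jordan_Normal_Form.Char_Poly"
begin

text \<open>Graphs on the vertex set {0..<n}, given by an adjacency predicate E.\<close>

definition graph_dist :: "(nat \<Rightarrow> nat \<Rightarrow> bool) \<Rightarrow> nat \<Rightarrow> nat \<Rightarrow> nat" where
  "graph_dist E u v = (LEAST k. (u, v) \<in> {(x, y). E x y} ^^ k)"

definition dist_matrix :: "nat \<Rightarrow> (nat \<Rightarrow> nat \<Rightarrow> bool) \<Rightarrow> real mat" where
  "dist_matrix n E = mat n n (\<lambda>(i, j). real (graph_dist E i j))"

definition transmission :: "nat \<Rightarrow> (nat \<Rightarrow> nat \<Rightarrow> bool) \<Rightarrow> nat \<Rightarrow> real" where
  "transmission n E i = (\<Sum>j<n. real (graph_dist E i j))"

definition Tr_matrix :: "nat \<Rightarrow> (nat \<Rightarrow> nat \<Rightarrow> bool) \<Rightarrow> real mat" where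
  "Tr_matrix n E = mat n n (\<lambda>(i, j). if i = j then transmission n E i else 0)"

definition distQ_matrix :: "nat \<Rightarrow> (nat \<Rightarrow> nat \<Rightarrow> bool) \<Rightarrow> real mat" where
  "distQ_matrix n E = Tr_matrix n E + dist_matrix n E"

definition Q_spread :: "nat \<Rightarrow> (nat \<Rightarrow> nat \<Rightarrow> bool) \<Rightarrow> real" where
  "Q_spread n E = Max {k. eigenvalue (distQ_matrix n E) k} - Min {k. eigenvalue (distQ_matrix n E) k}"

definition complete_bipartite :: "nat \<Rightarrow> nat \<Rightarrow> nat \<Rightarrow> nat \<Rightarrow> bool" where
  "complete_bipartite a b u v = (u < a + b \<and> v < a + b \<and> ((u < a) \<noteq> (v < a)))"

end

theory Submission
  imports Defs
begin

text \<open>In K(a,b) two distinct vertices are at distance 2 inside a part and 1 across, so the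
  distance signless Laplacian is a diagonal shift plus a block-constant matrix. Vectors summing to
  zero on one part give the eigenvalues 2a + b - 4 and a + 2b - 4; vectors constant on the parts
  give the two eigenvalues of the 2 x 2 quotient matrix, the roots of
  (x - (4a + b - 4)) (x - (a + 4b - 4)) = ab. For 2 \<le> a \<le> b the spread is therefore
  (a + 3b + sqrt (9 (a - b)^2 + 4ab)) / 2, which strictly decreases as the parts are balanced
  with a + b fixed; for the star K(1, n - 1) already the two quotient eigenvalues are further
  apart than the balanced spread.\<close>

lemma finite_eigenvalues:
  fixes A :: "'a :: field mat"
  assumes "A \<in> carrier_mat n n"
  shows "finite {k. eigenvalue A k}"
proof -
  have "char_poly A \<noteq> 0"
    using degree_monic_char_poly[OF assms] by auto
  then show ?thesis
    by (simp add: eigenvalue_root_char_poly[OF assms] poly_roots_finite)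
qed

lemma eigenvalueI:
  assumes "A \<in> carrier_mat n n" "v \<in> carrier_vec n" "v \<noteq> 0\<^sub>v n" "A *\<^sub>v v = k \<cdot>\<^sub>v v"
  shows "eigenvalue A k"
  using assms unfolding eigenvalue_def eigenvector_def by auto

lemma distQ_matrix_carrier: "distQ_matrix n E \<in> carrier_mat n n"
  by (simp add: distQ_matrix_def Tr_matrix_def dist_matrix_def)

lemma Q_spread_ge_eigenvalue_diff:
  assumes "eigenvalue (distQ_matrix n E) x" "eigenvalue (distQ_matrix n E) y"
  shows "x - y \<le> Q_spread n E"
proof -
  let ?S = "{k. eigenvalue (distQ_matrix n E) k}"
  have "finite ?S"
    by (rule finite_eigenvalues[OF distQ_matrix_carrier])
  with assms have "x \<le> Max ?S" "Min ?S \<le> y" by auto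
  then show ?thesis unfolding Q_spread_def by linarith
qed

lemma Q_spread_le_of_eigenvalues_within:
  assumes "eigenvalue (distQ_matrix n E) x"
    and "\<And>k. eigenvalue (distQ_matrix n E) k \<Longrightarrow> lo \<le> k \<and> k \<le> hi"
  shows "Q_spread n E \<le> hi - lo"
proof -
  let ?S = "{k. eigenvalue (distQ_matrix n E) k}"
  have "finite ?S" "?S \<noteq> {}"
    using finite_eigenvalues[OF distQ_matrix_carrier] assms(1) by auto
  then have "Max ?S \<in> ?S" "Min ?S \<in> ?S"
    using Max_in Min_in by blast+
  with assms(2) have "Max ?S \<le> hi" "lo \<le> Min ?S" by auto
  then show ?thesis unfolding Q_spread_def by linarith
qed

definition quad_root_hi :: "real \<Rightarrow> real \<Rightarrow> real \<Rightarrow> real" where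
  "quad_root_hi p q x = (p + q + sqrt ((p - q)\<^sup>2 + 4 * x)) / 2"

definition quad_root_lo :: "real \<Rightarrow> real \<Rightarrow> real \<Rightarrow> real" where
  "quad_root_lo p q x = (p + q - sqrt ((p - q)\<^sup>2 + 4 * x)) / 2"

lemma mult_diffs_eq_iff_quad_root:
  fixes p q x l :: real
  assumes "0 \<le> x"
  shows "(l - p) * (l - q) = x \<longleftrightarrow> l = quad_root_hi p q x \<or> l = quad_root_lo p q x"
proof -
  define D where "D = (p - q)\<^sup>2 + 4 * x"
  have "0 \<le> D" using assms by (simp add: D_def)
  have "(l - p) * (l - q) = x \<longleftrightarrow> (2 * l - p - q)\<^sup>2 = D"
    unfolding D_def by (auto simp: power2_eq_square algebra_simps)
  also have "\<dots> \<longleftrightarrow> 2 * l - p - q = sqrt D \<or> 2 * l - p - q = - sqrt D"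
    using \<open>0 \<le> D\<close> by auto
  also have "\<dots> \<longleftrightarrow> l = quad_root_hi p q x \<or> l = quad_root_lo p q x"
    unfolding quad_root_hi_def quad_root_lo_def D_def by (auto simp: field_simps)
  finally show ?thesis .
qed

lemma graph_dist_eqI:
  assumes "(u, v) \<in> {(x, y). E x y} ^^ k"
    and "\<And>k'. k' < k \<Longrightarrow> (u, v) \<notin> {(x, y). E x y} ^^ k'"
  shows "graph_dist E u v = k"
  unfolding graph_dist_def using assms by (metis (mono_tags) Least_equality not_le)

lemma graph_dist_complete_bipartite:
  assumes "0 < a" "0 < b" "i < a + b" "j < a + b"
  shows "graph_dist (complete_bipartite a b) i j =
           (if i = j then 0 else if (i < a) = (j < a) then 2 else 1)"
proof -
  let ?R = "{(x, y). complete_bipartite a b x y}"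
  consider "i = j" | "i \<noteq> j" "(i < a) \<noteq> (j < a)" | "i \<noteq> j" "(i < a) = (j < a)"
    by blast
  then show ?thesis
  proof cases
    case 1
    then show ?thesis by (auto intro: graph_dist_eqI)
  next
    case 2
    then have "(i, j) \<in> ?R ^^ 1"
      using assms by (simp add: complete_bipartite_def)
    with 2 show ?thesis by (auto intro: graph_dist_eqI)
  next
    case 3
    let ?w = "if i < a then a + b - 1 else 0"
    have "(i, ?w) \<in> ?R" "(?w, j) \<in> ?R"
      using assms 3 by (auto simp: complete_bipartite_def)
    then have "(i, j) \<in> ?R ^^ 2" by (auto simp: numeral_2_eq_2)
    moreover have "(i, j) \<notin> ?R ^^ k" if "k < 2" for k
      using that 3 by (auto simp: less_2_cases_iff complete_bipartite_def)
    ultimately show ?thesis using 3 by (auto intro: graph_dist_eqI)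
  qed
qed

lemma sum_lessThan_add_split:
  fixes a b :: nat
  shows "(\<Sum>j<a + b. f j) = (\<Sum>j<a. f j) + (\<Sum>j\<in>{a..<a + b}. f j)"
  using sum.atLeastLessThan_concat[of 0 a "a + b" f] by (simp add: lessThan_atLeast0)

lemma transmission_complete_bipartite:
  assumes "0 < a" "0 < b" "i < a + b"
  shows "transmission (a + b) (complete_bipartite a b) i =
           (if i < a then 2 * real a + real b - 2 else real a + 2 * real b - 2)"
proof -
  let ?w = "\<lambda>j. if (i < a) = (j < a) then 2 else 1 :: real"
  have "transmission (a + b) (complete_bipartite a b) i =
          (\<Sum>j<a + b. ?w j - (if j = i then 2 else 0))"
    unfolding transmission_def
    by (rule sum.cong) (use assms in \<open>auto simp: graph_dist_complete_bipartite\<close>)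
  also have "\<dots> = (\<Sum>j<a. ?w j) + (\<Sum>j\<in>{a..<a + b}. ?w j) - 2"
    using assms by (simp add: sum_subtractf sum_lessThan_add_split)
  finally show ?thesis by auto
qed

lemma distQ_matrix_complete_bipartite:
  assumes "0 < a" "0 < b" "i < a + b" "j < a + b"
  shows "distQ_matrix (a + b) (complete_bipartite a b) $$ (i, j) =
           (if i \<noteq> j then 0 else if i < a then 2 * real a + real b - 4 else real a + 2 * real b - 4)
           + (if (i < a) = (j < a) then 2 else 1)"
  using assms unfolding distQ_matrix_def Tr_matrix_def dist_matrix_def
  by (auto simp: graph_dist_complete_bipartite transmission_complete_bipartite)

lemma distQ_matrix_complete_bipartite_mult_vec:
  assumes "0 < a" "0 < b" "v \<in> carrier_vec (a + b)" "i < a + b"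
  shows "(distQ_matrix (a + b) (complete_bipartite a b) *\<^sub>v v) $ i =
     (if i < a then (2 * real a + real b - 4) * v $ i + 2 * (\<Sum>j<a. v $ j) + (\<Sum>j\<in>{a..<a + b}. v $ j)
      else (real a + 2 * real b - 4) * v $ i + (\<Sum>j<a. v $ j) + 2 * (\<Sum>j\<in>{a..<a + b}. v $ j))"
proof -
  let ?Q = "distQ_matrix (a + b) (complete_bipartite a b)"
  let ?s = "if i < a then 2 * real a + real b - 4 else real a + 2 * real b - 4"
  let ?w = "\<lambda>j. if (i < a) = (j < a) then 2 else 1 :: real"
  have "(?Q *\<^sub>v v) $ i = (\<Sum>j<a + b. ?Q $$ (i, j) * v $ j)"
    using assms distQ_matrix_carrier[of "a + b" "complete_bipartite a b"]
    by (simp add: scalar_prod_def lessThan_atLeast0)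
  also have "\<dots> = (\<Sum>j<a + b. (if j = i then ?s * v $ i else 0) + ?w j * v $ j)"
    by (rule sum.cong) (use assms in \<open>auto simp: distQ_matrix_complete_bipartite algebra_simps\<close>)
  also have "\<dots> = ?s * v $ i + (\<Sum>j<a. ?w j * v $ j) + (\<Sum>j\<in>{a..<a + b}. ?w j * v $ j)"
    using assms by (simp add: sum.distrib sum_lessThan_add_split)
  finally show ?thesis by (auto simp: sum_distrib_left)
qed

lemma eigenvalue_complete_bipartite_cases:
  assumes "0 < a" "0 < b"
    and "eigenvalue (distQ_matrix (a + b) (complete_bipartite a b)) l"
  shows "l = 2 * real a + real b - 4 \<or> l = real a + 2 * real b - 4 \<or>
         (l - (4 * real a + real b - 4)) * (l - (real a + 4 * real b - 4)) = real a * real b"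
proof -
  let ?Q = "distQ_matrix (a + b) (complete_bipartite a b)"
  obtain v where v: "v \<in> carrier_vec (a + b)" "v \<noteq> 0\<^sub>v (a + b)" "?Q *\<^sub>v v = l \<cdot>\<^sub>v v"
    using assms(3) distQ_matrix_carrier[of "a + b" "complete_bipartite a b"]
    unfolding eigenvalue_def eigenvector_def by auto
  define SA where "SA = (\<Sum>j<a. v $ j)"
  define SB where "SB = (\<Sum>j\<in>{a..<a + b}. v $ j)"
  have entry: "(?Q *\<^sub>v v) $ i = l * v $ i" if "i < a + b" for i
    using v(1,3) that by (metis carrier_vecD index_smult_vec(1))
  have part_A: "(l - (2 * real a + real b - 4)) * v $ i = 2 * SA + SB" if "i < a" for i
    using entry[of i] distQ_matrix_complete_bipartite_mult_vec[OF assms(1,2) v(1), of i] that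
    unfolding SA_def SB_def by (simp add: algebra_simps)
  have part_B: "(l - (real a + 2 * real b - 4)) * v $ i = SA + 2 * SB" if "a \<le> i" "i < a + b" for i
    using entry[of i] distQ_matrix_complete_bipartite_mult_vec[OF assms(1,2) v(1), of i] that
    unfolding SA_def SB_def by (simp add: algebra_simps)
  txt \<open>Summing the eigenvalue equation over each part gives the quotient system in SA, SB.\<close>
  have "(l - (2 * real a + real b - 4)) * SA = (\<Sum>i<a. (l - (2 * real a + real b - 4)) * v $ i)"
    by (simp add: SA_def sum_distrib_left)
  also have "\<dots> = real a * (2 * SA + SB)"
    using part_A by simp
  finally have sum_A: "(l - (4 * real a + real b - 4)) * SA = real a * SB"
    by (simp add: algebra_simps)
  have "(l - (real a + 2 * real b - 4)) * SB = (\<Sum>i\<in>{a..<a + b}. (l - (real a + 2 * real b - 4)) * v $ i)"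
    by (simp add: SB_def sum_distrib_left)
  also have "\<dots> = real b * (SA + 2 * SB)"
    using part_B by simp
  finally have sum_B: "(l - (real a + 4 * real b - 4)) * SB = real b * SA"
    by (simp add: algebra_simps)
  show ?thesis
  proof (rule ccontr)
    assume "\<not> ?thesis"
    then have ne_A: "l \<noteq> 2 * real a + real b - 4" and ne_B: "l \<noteq> real a + 2 * real b - 4"
      and ne: "(l - (4 * real a + real b - 4)) * (l - (real a + 4 * real b - 4)) \<noteq> real a * real b"
      by auto
    have "(l - (4 * real a + real b - 4)) * (l - (real a + 4 * real b - 4)) * SA = real a * real b * SA"
      "(l - (4 * real a + real b - 4)) * (l - (real a + 4 * real b - 4)) * SB = real a * real b * SB"
      using sum_A sum_B by (metis mult.assoc mult.commute)+
    with ne have "SA = 0" "SB = 0" by simp_all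
    have "v = 0\<^sub>v (a + b)"
    proof (rule eq_vecI)
      fix i assume "i < dim_vec (0\<^sub>v (a + b) :: real vec)"
      then show "v $ i = 0\<^sub>v (a + b) $ i"
        using part_A[of i] part_B[of i] ne_A ne_B \<open>SA = 0\<close> \<open>SB = 0\<close> by (cases "i < a") auto
    qed (use v(1) in simp)
    with v(2) show False ..
  qed
qed

lemma eigenvalue_complete_bipartite_quotient:
  assumes "0 < a" "0 < b"
    and l: "(l - (4 * real a + real b - 4)) * (l - (real a + 4 * real b - 4)) = real a * real b"
  shows "eigenvalue (distQ_matrix (a + b) (complete_bipartite a b)) l"
proof -
  define v where "v = vec (a + b) (\<lambda>i. if i < a then real b else l - (4 * real a + real b - 4))"
  have v: "v \<in> carrier_vec (a + b)" by (simp add: v_def)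
  have SA: "(\<Sum>j<a. v $ j) = real a * real b"
    by (simp add: v_def)
  have SB: "(\<Sum>j\<in>{a..<a + b}. v $ j) = real b * (l - (4 * real a + real b - 4))"
    by (simp add: v_def)
  have "distQ_matrix (a + b) (complete_bipartite a b) *\<^sub>v v = l \<cdot>\<^sub>v v"
  proof (rule eq_vecI)
    fix i assume "i < dim_vec (l \<cdot>\<^sub>v v)"
    then have i: "i < a + b" using v by simp
    have Qv: "(distQ_matrix (a + b) (complete_bipartite a b) *\<^sub>v v) $ i =
     (if i < a then (2 * real a + real b - 4) * v $ i + 2 * (real a * real b) + real b * (l - (4 * real a + real b - 4))
      else (real a + 2 * real b - 4) * v $ i + real a * real b + 2 * (real b * (l - (4 * real a + real b - 4))))"
      using distQ_matrix_complete_bipartite_mult_vec[OF assms(1,2) v i] by (simp only: SA SB)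
    show "(distQ_matrix (a + b) (complete_bipartite a b) *\<^sub>v v) $ i = (l \<cdot>\<^sub>v v) $ i"
    proof (cases "i < a")
      case True
      then show ?thesis using Qv i by (simp add: v_def algebra_simps)
    next
      case False
      have "(real a + 2 * real b - 4) * (l - (4 * real a + real b - 4)) + real a * real b
              + 2 * (real b * (l - (4 * real a + real b - 4))) = l * (l - (4 * real a + real b - 4))"
        by (subst l[symmetric]) (simp add: algebra_simps)
      with False show ?thesis using Qv i by (simp add: v_def)
    qed
  qed (use v distQ_matrix_carrier[of "a + b" "complete_bipartite a b"] in simp)
  moreover have "v \<noteq> 0\<^sub>v (a + b)"
    using assms(1,2) by (auto simp: v_def dest: arg_cong[where f = "\<lambda>w. w $ 0"])
  ultimately show ?thesis
    using eigenvalueI[OF distQ_matrix_carrier v] by blast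
qed

lemma eigenvalue_complete_bipartite_part:
  assumes "2 \<le> a" "0 < b"
  shows "eigenvalue (distQ_matrix (a + b) (complete_bipartite a b)) (2 * real a + real b - 4)"
proof -
  define v :: "real vec" where "v = vec (a + b) (\<lambda>i. if i = 0 then 1 else if i = 1 then -1 else 0)"
  have v: "v \<in> carrier_vec (a + b)" by (simp add: v_def)
  have SA: "(\<Sum>j<a. v $ j) = 0"
  proof -
    have "(\<Sum>j<a. v $ j) = (\<Sum>j<a. (if j = 0 then 1 else 0) - (if j = 1 then 1 else 0))"
      using assms by (intro sum.cong) (auto simp: v_def)
    then show ?thesis using assms by (simp add: sum_subtractf)
  qed
  have SB: "(\<Sum>j\<in>{a..<a + b}. v $ j) = 0"
    using assms by (simp add: v_def)
  have "distQ_matrix (a + b) (complete_bipartite a b) *\<^sub>v v = (2 * real a + real b - 4) \<cdot>\<^sub>v v"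
  proof (rule eq_vecI)
    fix i assume "i < dim_vec ((2 * real a + real b - 4) \<cdot>\<^sub>v v)"
    then have "i < a + b" using v by simp
    then show "(distQ_matrix (a + b) (complete_bipartite a b) *\<^sub>v v) $ i
                 = ((2 * real a + real b - 4) \<cdot>\<^sub>v v) $ i"
      using distQ_matrix_complete_bipartite_mult_vec[of a b v i] assms v
      by (simp add: SA SB, auto simp: v_def)
  qed (use v distQ_matrix_carrier[of "a + b" "complete_bipartite a b"] in simp)
  moreover have "v \<noteq> 0\<^sub>v (a + b)"
    using assms by (auto simp: v_def dest: arg_cong[where f = "\<lambda>w. w $ 0"])
  ultimately show ?thesis
    using eigenvalueI[OF distQ_matrix_carrier v] by blast
qed

definition bip_disc :: "real \<Rightarrow> real \<Rightarrow> real" where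
  "bip_disc x y = 9 * (x - y)\<^sup>2 + 4 * x * y"

definition bip_spread :: "real \<Rightarrow> real \<Rightarrow> real" where
  "bip_spread x y = (x + 3 * y + sqrt (bip_disc x y)) / 2"

lemma quad_roots_complete_bipartite:
  "quad_root_hi (4 * x + y - 4) (x + 4 * y - 4) (x * y) = (5 * x + 5 * y - 8 + sqrt (bip_disc x y)) / 2"
  "quad_root_lo (4 * x + y - 4) (x + 4 * y - 4) (x * y) = (5 * x + 5 * y - 8 - sqrt (bip_disc x y)) / 2"
  unfolding quad_root_hi_def quad_root_lo_def bip_disc_def
  by (simp_all add: power2_eq_square algebra_simps)

lemma eigenvalue_complete_bipartite_quad_roots:
  assumes "0 < a" "0 < b"
  shows "eigenvalue (distQ_matrix (a + b) (complete_bipartite a b))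
           ((5 * real a + 5 * real b - 8 + sqrt (bip_disc a b)) / 2)"
    and "eigenvalue (distQ_matrix (a + b) (complete_bipartite a b))
           ((5 * real a + 5 * real b - 8 - sqrt (bip_disc a b)) / 2)"
  using eigenvalue_complete_bipartite_quotient[OF assms]
    mult_diffs_eq_iff_quad_root[of "real a * real b"]
  by (simp_all add: quad_roots_complete_bipartite)

lemma Q_spread_complete_bipartite_ge:
  assumes "0 < a" "0 < b"
  shows "sqrt (bip_disc a b) \<le> Q_spread (a + b) (complete_bipartite a b)"
  using Q_spread_ge_eigenvalue_diff[OF eigenvalue_complete_bipartite_quad_roots[OF assms]]
  by (simp add: field_simps)

lemma Q_spread_complete_bipartite:
  assumes "2 \<le> a" "a \<le> b"
  shows "Q_spread (a + b) (complete_bipartite a b) = bip_spread a b"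
proof -
  let ?Q = "distQ_matrix (a + b) (complete_bipartite a b)"
  let ?hi = "(5 * real a + 5 * real b - 8 + sqrt (bip_disc a b)) / 2"
  have ab: "0 < a" "0 < b" using assms by linarith+
  have "bip_disc a b \<le> (real a + 3 * real b)\<^sup>2"
    using assms by (simp add: bip_disc_def power2_eq_square algebra_simps)
  then have "sqrt (bip_disc a b) \<le> real a + 3 * real b"
    by (simp add: real_le_lsqrt)
  moreover have "0 \<le> sqrt (bip_disc a b)"
    by (simp add: bip_disc_def)
  ultimately have "2 * real a + real b - 4 \<le> k \<and> k \<le> ?hi" if "eigenvalue ?Q k" for k
    using eigenvalue_complete_bipartite_cases[OF ab that] assms(2)
    by (auto simp: mult_diffs_eq_iff_quad_root quad_roots_complete_bipartite simp del: real_sqrt_ge_0_iff)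
  then have "Q_spread (a + b) (complete_bipartite a b) \<le> ?hi - (2 * real a + real b - 4)"
    using Q_spread_le_of_eigenvalues_within eigenvalue_complete_bipartite_quad_roots(1)[OF ab]
    by blast
  moreover have "?hi - (2 * real a + real b - 4) \<le> Q_spread (a + b) (complete_bipartite a b)"
    using Q_spread_ge_eigenvalue_diff eigenvalue_complete_bipartite_quad_roots(1)[OF ab]
      eigenvalue_complete_bipartite_part[OF assms(1) ab(2)] by blast
  moreover have "?hi - (2 * real a + real b - 4) = bip_spread a b"
    by (simp add: bip_spread_def field_simps)
  ultimately show ?thesis by linarith
qed

lemma bip_spread_le:
  fixes m k :: real
  assumes "0 \<le> m" "m \<le> k"
  shows "bip_spread m k \<le> 3 * k"
proof -
  have "bip_disc m k \<le> (3 * k - m)\<^sup>2"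
    using mult_nonneg_nonneg[OF assms(1), of "k - m"] assms(2)
    by (simp add: bip_disc_def power2_eq_square algebra_simps)
  then have "sqrt (bip_disc m k) \<le> 3 * k - m"
    using assms by (simp add: real_le_lsqrt)
  then show ?thesis by (simp add: bip_spread_def)
qed

lemma bip_spread_less_unbalanced:
  fixes a m k :: real
  assumes "0 < a" "a < m" "m \<le> k"
  shows "bip_spread m k < bip_spread a (m + k - a)"
proof -
  have "bip_disc a (m + k - a) - bip_disc m k = 32 * (m - a) * (k - a)"
    by (simp add: bip_disc_def power2_eq_square algebra_simps)
  also have "\<dots> > 0" using assms by simp
  finally have "sqrt (bip_disc m k) < sqrt (bip_disc a (m + k - a))"
    by simp
  with assms show ?thesis
    unfolding bip_spread_def by argo
qed

lemma bip_spread_less_star: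
  fixes m k :: real
  assumes "2 \<le> m" "m \<le> k"
  shows "bip_spread m k < sqrt (bip_disc 1 (m + k - 1))"
proof -
  have "bip_disc 1 (m + k - 1) - (3 * k)\<^sup>2 = 9 * ((m - 2) * (m + 2 * k - 2)) + 4 * (m + k - 1)"
    by (simp add: bip_disc_def power2_eq_square algebra_simps)
  also have "\<dots> > 0"
    using assms mult_nonneg_nonneg[of "m - 2" "m + 2 * k - 2"] by argo
  finally have "(3 * k)\<^sup>2 < bip_disc 1 (m + k - 1)"
    by simp
  then have "3 * k < sqrt (bip_disc 1 (m + k - 1))"
    by (simp add: real_less_rsqrt)
  with bip_spread_le[of m k] assms show ?thesis by linarith
qed

theorem corollary4p4:
  fixes n a :: nat
  assumes "0 < a" and "2 * a \<le> n"
  shows "Q_spread n (complete_bipartite a (n - a))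
           \<ge> Q_spread n (complete_bipartite (n div 2) (n - n div 2)) \<and>
         (Q_spread n (complete_bipartite a (n - a))
           = Q_spread n (complete_bipartite (n div 2) (n - n div 2)) \<longleftrightarrow> a = n div 2)"
proof (cases "a = n div 2")
  case False
  define m where "m = n div 2"
  define k where "k = n - m"
  have "a < m" "2 \<le> m" "m \<le> k" "n = m + k"
    using assms False by (auto simp: m_def k_def)
  have balanced: "Q_spread n (complete_bipartite m k) = bip_spread m k"
    using Q_spread_complete_bipartite[of m k] \<open>2 \<le> m\<close> \<open>m \<le> k\<close> \<open>n = m + k\<close> by simp
  have "bip_spread m k < Q_spread n (complete_bipartite a (n - a))"
  proof (cases "a = 1")
    case True
    have "bip_spread m k < sqrt (bip_disc 1 (m + k - 1))"
      using bip_spread_less_star \<open>2 \<le> m\<close> \<open>m \<le> k\<close> by simp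
    also have "\<dots> \<le> Q_spread n (complete_bipartite 1 (n - 1))"
      using Q_spread_complete_bipartite_ge[of 1 "n - 1"] \<open>2 \<le> m\<close> \<open>n = m + k\<close> by (simp add: of_nat_diff)
    finally show ?thesis using True by simp
  next
    case False
    have "bip_spread m k < bip_spread a (m + k - a)"
      using bip_spread_less_unbalanced assms(1) \<open>a < m\<close> \<open>m \<le> k\<close> by simp
    also have "\<dots> = Q_spread n (complete_bipartite a (n - a))"
      using Q_spread_complete_bipartite[of a "n - a"] assms False \<open>a < m\<close> \<open>n = m + k\<close>
      by (simp add: of_nat_diff)
    finally show ?thesis .
  qed
  then show ?thesis
    using balanced False by (simp add: m_def k_def)
qed simp

end
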